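(* Fix $\mathbb{B}_\ell$, $N$, $\lambda\in[0,1]$ and $\epsilon>0$, with $\mathcal H$, $F$ and ${}^\epsilon\!F$ as in the context. If $\rho$ is $N$-representable and $c\in\mathbb R$ (identified with the constant function $c$ on $\mathbb{B}_\ell$), then $${}^\epsilon\!F(\rho+c)={}^\epsilon\!F(\rho)+\frac{1}{2\epsilon}\ell^3c^2.$$
   Context: Let $\mathbb{B}_\ell=[-\ell/2,\ell/2]^3$ and $\mathcal H=L^2(\mathbb{B}_\ell)$ (real-valued) with inner product $(u|w)=\int_{\mathbb{B}_\ell}uw\,d\mathbf r$ and norm $\|\cdot\|_2$. For $v\in\mathcal H$, $\lambda\in[0,1]$, let $H_\lambda(v)=-\tfrac12\sum_{i=1}^N\Delta_i+\lambda\sum_{i<j}|\mathbf r_i-\mathbf r_j|^{-1}+\sum_i v(\mathbf r_i)$ and $E(v)=\inf_\Psi\langle\Psi|H_\lambda(v)|\Psi\rangle$ over normalized $\Psi\in H^1_0(\mathbb{B}_\ell^N)$ antisymmetric separately in the first $N_\uparrow$ and last $N-N_\uparrow$ coordinates. Let $F(\rho)=\sup_{v\in\mathcal H}(E(v)-(v|\rho))\in\mathbb{R}\cup\{+\infty\}$ and ${}^\epsilon\!F(\rho)=\inf_{\rho'\in\mathcal H}(F(\rho')+\tfrac1{2\epsilon}\|\rho-\rho'\|_2^2)$. A density $\rho$ is $N$-representable if it is the one-electron density of some such normalized antisymmetrized $\Psi\in H^1_0(\mathbb{B}_\ell^N)$; equivalently $\rho\ge0$ a.e., $\sqrt\rho\in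 H^1_0(\mathbb{B}_\ell)$ and $\int_{\mathbb{B}_\ell}\rho=N$. $F(\rho')<\infty$ only if $\rho'$ is $N$-representable. *)

theory Defs
  imports "HOL-Analysis.Analysis" "HOL-Combinatorics.Permutations"
begin

fun iter_pd :: "'a::euclidean_space list \<Rightarrow> ('a \<Rightarrow> real) \<Rightarrow> 'a \<Rightarrow> real" where
  "iter_pd [] f = f"
| "iter_pd (b # bs) f = (\<lambda>x. frechet_derivative (iter_pd bs f) (at x) b)"

definition smooth_fun :: "('a::euclidean_space \<Rightarrow> real) \<Rightarrow> bool" where
  "smooth_fun f \<longleftrightarrow> (\<forall>bs. set bs \<subseteq> Basis \<longrightarrow> (\<forall>x. iter_pd bs f differentiable (at x)))"

definition tsupport :: "('a::euclidean_space \<Rightarrow> real) \<Rightarrow> 'a set" where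
  "tsupport f = closure {x. f x \<noteq> 0}"

definition test_fun :: "'a::euclidean_space set \<Rightarrow> ('a \<Rightarrow> real) \<Rightarrow> bool" where
  "test_fun U f \<longleftrightarrow> smooth_fun f \<and> compact (tsupport f) \<and> tsupport f \<subseteq> U"

definition grad :: "('a::euclidean_space \<Rightarrow> real) \<Rightarrow> 'a \<Rightarrow> 'a" where
  "grad f x = (\<Sum>b\<in>Basis. frechet_derivative f (at x) b *\<^sub>R b)"

definition L2 :: "'a::euclidean_space set \<Rightarrow> ('a \<Rightarrow> real) \<Rightarrow> bool" where
  "L2 D f \<longleftrightarrow> set_borel_measurable lebesgue D f \<and> set_integrable lebesgue D (\<lambda>x. (f x)^2)"

definition L2v :: "'a::euclidean_space set \<Rightarrow> ('a \<Rightarrow> 'a) \<Rightarrow> bool" where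
  "L2v D g \<longleftrightarrow> set_borel_measurable lebesgue D g \<and> set_integrable lebesgue D (\<lambda>x. (norm (g x))^2)"

text \<open>H10 U u g: u belongs to H^1_0(U) (closure of C_c^infinity(U) in the H^1 norm)
  and g is its (weak) gradient.\<close>
definition H10 :: "'a::euclidean_space set \<Rightarrow> ('a \<Rightarrow> real) \<Rightarrow> ('a \<Rightarrow> 'a) \<Rightarrow> bool" where
  "H10 U u g \<longleftrightarrow> L2 U u \<and> L2v U g \<and>
     (\<exists>\<phi>. (\<forall>k. test_fun U (\<phi> k)) \<and>
          (\<lambda>k. LINT x:U|lebesgue. (\<phi> k x - u x)^2) \<longlonglongrightarrow> 0 \<and>
          (\<lambda>k. LINT x:U|lebesgue. (norm (grad (\<phi> k) x - g x))^2) \<longlonglongrightarrow> 0)"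

definition Bbox :: "real \<Rightarrow> (real^3) set" where
  "Bbox l = {r. \<forall>i. \<bar>r $ i\<bar> \<le> l / 2}"

definition Bbox_open :: "real \<Rightarrow> (real^3) set" where
  "Bbox_open l = {r. \<forall>i. \<bar>r $ i\<bar> < l / 2}"

text \<open>Configuration space (open box)^N, N = CARD('n); particle j sits at X \$ j.\<close>
definition Conf :: "real \<Rightarrow> (real^3^'n) set" where
  "Conf l = {X. \<forall>j i. \<bar>X $ j $ i\<bar> < l / 2}"

text \<open>Antisymmetry separately in the indices in S (spin up) and in its complement.\<close>
definition antisym_spin :: "'n::finite set \<Rightarrow> (real^3^'n \<Rightarrow> real) \<Rightarrow> bool" where
  "antisym_spin S \<Psi> \<longleftrightarrow> (\<forall>\<sigma> X. \<sigma> permutes UNIV \<and> \<sigma> ` S = S \<longrightarrow>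
       \<Psi> (\<chi> j. X $ \<sigma> j) = of_int (sign \<sigma>) * \<Psi> X)"

text \<open>Expectation value of H_lambda(v) in the state Psi with (weak) gradient g.
  The sum over pairs i<j is written as one half of the sum over ordered pairs i \<noteq> j.\<close>
definition expect :: "real \<Rightarrow> real \<Rightarrow> (real^3 \<Rightarrow> real) \<Rightarrow> (real^3^'n::finite \<Rightarrow> real)
    \<Rightarrow> (real^3^'n \<Rightarrow> real^3^'n) \<Rightarrow> real" where
  "expect l lam v \<Psi> g =
     (1/2) * (LINT X:Conf l|lebesgue. (norm (g X))^2)
     + lam * (LINT X:Conf l|lebesgue.
          ((1/2) * (\<Sum>i\<in>UNIV. \<Sum>j\<in>UNIV - {i}. 1 / dist (X $ i) (X $ j))) * (\<Psi> X)^2)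
     + (LINT X:Conf l|lebesgue. (\<Sum>i\<in>UNIV. v (X $ i)) * (\<Psi> X)^2)"

definition admissible :: "real \<Rightarrow> 'n::finite set \<Rightarrow> (real^3^'n \<Rightarrow> real) \<Rightarrow> (real^3^'n \<Rightarrow> real^3^'n) \<Rightarrow> bool" where
  "admissible l S \<Psi> g \<longleftrightarrow> H10 (Conf l) \<Psi> g \<and> (LINT X:Conf l|lebesgue. (\<Psi> X)^2) = 1
      \<and> antisym_spin S \<Psi>"

definition Eground :: "real \<Rightarrow> real \<Rightarrow> 'n::finite set \<Rightarrow> (real^3 \<Rightarrow> real) \<Rightarrow> ereal" where
  "Eground l lam S v =
     (INF p \<in> {(\<Psi>, g). admissible l S \<Psi> g}. ereal (expect l lam v (fst p) (snd p)))"

definition inner_H :: "real \<Rightarrow> (real^3 \<Rightarrow> real) \<Rightarrow> (real^3 \<Rightarrow> real) \<Rightarrow> real" where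
  "inner_H l u w = (LINT r:Bbox l|lebesgue. u r * w r)"

definition normsq_H :: "real \<Rightarrow> (real^3 \<Rightarrow> real) \<Rightarrow> real" where
  "normsq_H l u = (LINT r:Bbox l|lebesgue. (u r)^2)"

definition Flieb :: "real \<Rightarrow> real \<Rightarrow> 'n::finite set \<Rightarrow> (real^3 \<Rightarrow> real) \<Rightarrow> ereal" where
  "Flieb l lam S \<rho> = (SUP v \<in> {v. L2 (Bbox l) v}. Eground l lam S v - ereal (inner_H l v \<rho>))"

definition Feps :: "real \<Rightarrow> real \<Rightarrow> 'n::finite set \<Rightarrow> real \<Rightarrow> (real^3 \<Rightarrow> real) \<Rightarrow> ereal" where
  "Feps l lam S \<epsilon> \<rho> = (INF \<rho>' \<in> {\<rho>'. L2 (Bbox l) \<rho>'}.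
      Flieb l lam S \<rho>' + ereal (normsq_H l (\<lambda>r. \<rho> r - \<rho>' r) / (2 * \<epsilon>)))"

text \<open>N-representability (the characterisation stated in the context).\<close>
definition N_representable :: "real \<Rightarrow> nat \<Rightarrow> (real^3 \<Rightarrow> real) \<Rightarrow> bool" where
  "N_representable l N \<rho> \<longleftrightarrow> (AE r in lebesgue. r \<in> Bbox l \<longrightarrow> \<rho> r \<ge> 0)
      \<and> (\<exists>g. H10 (Bbox_open l) (\<lambda>r. sqrt (\<rho> r)) g)
      \<and> (LINT r:Bbox l|lebesgue. \<rho> r) = real N"

end

theory Submission
  imports Defs
begin

text \<open>
  Adding a constant \<open>c\<close> to the potential shifts the energy of every normalised state by \<open>N c\<close>,
  so \<open>F(\<rho>') \<ge> E(0) + c (N - \<integral>\<rho>')\<close> for all \<open>c\<close>; as \<open>E(0) \<ge> 0\<close>, this forces \<open>F(\<rho>') = \<infinity>\<close>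
  unless \<open>\<integral>\<rho>' = N = \<integral>\<rho>\<close>. Hence only densities with the same integral as \<open>\<rho>\<close> compete in the
  infimum defining \<open>\<^sup>\<epsilon>F\<close>, and for those \<open>\<rho> - \<rho>'\<close> has mean zero, so
  \<open>\<parallel>\<rho> + c - \<rho>'\<parallel>\<^sup>2 = \<parallel>\<rho> - \<rho>'\<parallel>\<^sup>2 + \<ell>\<^sup>3 c\<^sup>2\<close>.
\<close>

lemma INF_add_ereal: "(INF i\<in>I. f i + ereal k) = (INF i\<in>I. f i) + ereal k"
proof (rule antisym)
  show "(INF i\<in>I. f i) + ereal k \<le> (INF i\<in>I. f i + ereal k)"
    by (intro INF_greatest add_right_mono INF_lower)
  have "(INF i\<in>I. f i + ereal k) - ereal k \<le> (INF i\<in>I. f i)"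
  proof (rule INF_greatest)
    fix i assume "i \<in> I"
    then have "(INF i\<in>I. f i + ereal k) \<le> f i + ereal k" by (rule INF_lower)
    then show "(INF i\<in>I. f i + ereal k) - ereal k \<le> f i"
      by (simp add: ereal_minus_le_iff)
  qed
  then show "(INF i\<in>I. f i + ereal k) \<le> (INF i\<in>I. f i) + ereal k"
    by (simp add: ereal_minus_le_iff)
qed

lemma set_integrable_const_real:
  assumes "A \<in> sets M" "emeasure M A \<noteq> \<infinity>"
  shows "set_integrable M A (\<lambda>_. c::real)"
  using assms unfolding set_integrable_def by (simp add: less_top)

lemma set_borel_measurable_diff:
  assumes "set_borel_measurable M A f" "set_borel_measurable M A g"
  shows "set_borel_measurable M A (\<lambda>x. f x - g x :: real)"
  using assms unfolding set_borel_measurable_def by (simp add: right_diff_distrib)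

lemma set_borel_measurable_power2:
  assumes "set_borel_measurable M A f"
  shows "set_borel_measurable M A (\<lambda>x. (f x)\<^sup>2 :: real)"
proof -
  have "(\<lambda>x. indicator A x *\<^sub>R (f x)\<^sup>2) = (\<lambda>x. (indicator A x *\<^sub>R f x)\<^sup>2)"
    by (auto simp: indicator_def)
  then show ?thesis using assms unfolding set_borel_measurable_def by simp
qed

lemma set_integrable_if_set_integrable_power2:
  assumes "A \<in> sets M" "emeasure M A \<noteq> \<infinity>"
    and "set_borel_measurable M A f" "set_integrable M A (\<lambda>x. (f x)\<^sup>2 :: real)"
  shows "set_integrable M A f"
proof (rule set_integrable_bound)
  show "set_integrable M A (\<lambda>x. 1 + (f x)\<^sup>2)"
    using assms(1,2,4) by (intro set_integral_add(1) set_integrable_const_real)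
  have "\<bar>y\<bar> \<le> \<bar>1 + y\<^sup>2\<bar>" for y :: real
  proof -
    have "0 \<le> (\<bar>y\<bar> - 1)\<^sup>2 + \<bar>y\<bar>"
      by simp
    then show ?thesis
      by (simp add: power2_diff)
  qed
  then show "AE x in M. x \<in> A \<longrightarrow> norm (f x) \<le> norm (1 + (f x)\<^sup>2)"
    by simp
  show "set_borel_measurable M A f"
    by (fact assms(3))
qed

lemma set_integrable_power2_diff:
  assumes "set_borel_measurable M A f" "set_integrable M A (\<lambda>x. (f x)\<^sup>2)"
    and "set_borel_measurable M A g" "set_integrable M A (\<lambda>x. (g x)\<^sup>2)"
  shows "set_integrable M A (\<lambda>x. (f x - g x)\<^sup>2 :: real)"
proof (rule set_integrable_bound)
  show "set_integrable M A (\<lambda>x. 2 * (f x)\<^sup>2 + 2 * (g x)\<^sup>2)"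
    using assms by auto
  show "set_borel_measurable M A (\<lambda>x. (f x - g x)\<^sup>2)"
    using assms by (intro set_borel_measurable_power2 set_borel_measurable_diff)
  show "AE x in M. x \<in> A \<longrightarrow> norm ((f x - g x)\<^sup>2) \<le> norm (2 * (f x)\<^sup>2 + 2 * (g x)\<^sup>2)"
    by (intro AE_I2) (smt (verit) real_norm_def zero_le_power2 power2_diff power2_sum)
qed

lemma set_integral_power2_add_const:
  assumes "A \<in> sets M" "emeasure M A \<noteq> \<infinity>"
    and "set_integrable M A h" "set_integrable M A (\<lambda>x. (h x)\<^sup>2)"
    and "(LINT x:A|M. h x) = 0"
  shows "(LINT x:A|M. (h x + c)\<^sup>2) = (LINT x:A|M. (h x)\<^sup>2) + measure M A * c\<^sup>2"
proof -
  have const: "set_integrable M A (\<lambda>_. c\<^sup>2)"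
    using assms(1,2) by (rule set_integrable_const_real)
  have "(LINT x:A|M. (h x + c)\<^sup>2) = (LINT x:A|M. ((h x)\<^sup>2 + 2 * c * h x) + c\<^sup>2)"
    by (simp add: power2_sum algebra_simps)
  also have "\<dots> = (LINT x:A|M. (h x)\<^sup>2) + (LINT x:A|M. 2 * c * h x) + (LINT x:A|M. c\<^sup>2)"
    using assms(3,4) const by simp
  also have "\<dots> = (LINT x:A|M. (h x)\<^sup>2) + measure M A * c\<^sup>2"
    using assms(1,2,5) by (simp add: set_integral_const)
  finally show ?thesis .
qed

lemma Bbox_eq_cbox: "Bbox l = cbox (-(\<chi> i. l/2)) (\<chi> i. l/2)"
proof (rule set_eqI)
  fix x :: "real^3"
  show "x \<in> Bbox l \<longleftrightarrow> x \<in> cbox (-(\<chi> i. l/2)) (\<chi> i. l/2)"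
    unfolding Bbox_def mem_box_cart mem_Collect_eq vector_uminus_component vec_lambda_beta
    by (meson abs_le_iff minus_le_iff)
qed

lemma sets_Bbox [simp]: "Bbox l \<in> sets lebesgue"
  unfolding Bbox_eq_cbox by simp

lemma emeasure_Bbox_finite [simp]: "emeasure lebesgue (Bbox l) \<noteq> \<infinity>"
  using emeasure_lborel_cbox_finite unfolding Bbox_eq_cbox
  by (simp add: emeasure_completion less_top)

lemma measure_Bbox:
  assumes "l > 0"
  shows "measure lebesgue (Bbox l) = l^3"
proof -
  have "0 \<in> Bbox l"
    using assms by (simp add: Bbox_def)
  then have "measure lborel (Bbox l) = (\<Prod>i\<in>(UNIV::3 set). l)"
    unfolding Bbox_eq_cbox by (subst content_cbox_cart) auto
  then show ?thesis
    unfolding Bbox_eq_cbox by (simp add: measure_completion)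
qed

lemma L2_Bbox_const: "L2 (Bbox l) (\<lambda>_. c)"
proof -
  have "(\<lambda>x. indicator (Bbox l) x * c) \<in> borel_measurable lebesgue"
    by (intro borel_measurable_times borel_measurable_indicator sets_Bbox borel_measurable_const)
  then show ?thesis
    unfolding L2_def set_borel_measurable_def
    using set_integrable_const_real[OF sets_Bbox emeasure_Bbox_finite] by simp
qed

lemma normsq_H_add_const:
  assumes "l > 0" and \<rho>: "L2 (Bbox l) \<rho>" and \<rho>': "L2 (Bbox l) \<rho>'"
    and same_mass: "(LINT r:Bbox l|lebesgue. \<rho> r) = (LINT r:Bbox l|lebesgue. \<rho>' r)"
  shows "normsq_H l (\<lambda>r. \<rho> r + c - \<rho>' r) = normsq_H l (\<lambda>r. \<rho> r - \<rho>' r) + l^3 * c\<^sup>2"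
proof -
  have int: "set_integrable lebesgue (Bbox l) \<rho>" "set_integrable lebesgue (Bbox l) \<rho>'"
    using \<rho> \<rho>' set_integrable_if_set_integrable_power2[OF sets_Bbox emeasure_Bbox_finite]
    unfolding L2_def by blast+
  have "normsq_H l (\<lambda>r. \<rho> r + c - \<rho>' r) = (LINT r:Bbox l|lebesgue. ((\<rho> r - \<rho>' r) + c)\<^sup>2)"
    unfolding normsq_H_def by (simp add: algebra_simps)
  also have "\<dots> = normsq_H l (\<lambda>r. \<rho> r - \<rho>' r) + measure lebesgue (Bbox l) * c\<^sup>2"
    unfolding normsq_H_def using \<rho> \<rho>' int same_mass unfolding L2_def
    by (intro set_integral_power2_add_const set_integrable_power2_diff sets_Bbox emeasure_Bbox_finite)
      (simp_all add: set_integral_diff)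
  finally show ?thesis using measure_Bbox[OF \<open>l > 0\<close>] by simp
qed

lemma expect_const_potential:
  fixes \<Psi> :: "real^3^'n::finite \<Rightarrow> real"
  assumes "(LINT X:Conf l|lebesgue. (\<Psi> X)\<^sup>2) = 1"
  shows "expect l lam (\<lambda>_. c) \<Psi> g = expect l lam (\<lambda>_. 0) \<Psi> g + real CARD('n) * c"
  using assms unfolding expect_def by simp

lemma expect_zero_potential_nonneg:
  fixes \<Psi> :: "real^3^'n::finite \<Rightarrow> real"
  assumes "0 \<le> lam"
  shows "0 \<le> expect l lam (\<lambda>_. 0) \<Psi> g"
proof -
  have integral_nonneg: "0 \<le> (LINT X:Conf l|lebesgue. f X)" if "\<And>X. 0 \<le> f X"
    for f :: "real^3^'n \<Rightarrow> real"
    unfolding set_lebesgue_integral_def by (intro integral_nonneg_AE AE_I2) (simp add: that)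
  have "0 \<le> (LINT X:Conf l|lebesgue. (norm (g X))\<^sup>2)"
    by (rule integral_nonneg) simp
  moreover have "0 \<le> (LINT X:Conf l|lebesgue.
      ((1/2) * (\<Sum>i\<in>UNIV. \<Sum>j\<in>UNIV - {i}. 1 / dist (X $ i) (X $ j))) * (\<Psi> X)\<^sup>2)"
    by (rule integral_nonneg) (intro mult_nonneg_nonneg sum_nonneg; simp)
  ultimately show ?thesis
    unfolding expect_def using assms by simp
qed

lemma Eground_const_potential:
  fixes S :: "'n::finite set"
  shows "Eground l lam S (\<lambda>_. c) = Eground l lam S (\<lambda>_. 0) + ereal (real CARD('n) * c)"
proof -
  have "Eground l lam S (\<lambda>_. c) = (INF p \<in> {(\<Psi>, g). admissible l S \<Psi> g}.
      ereal (expect l lam (\<lambda>_. 0) (fst p) (snd p)) + ereal (real CARD('n) * c))"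
    unfolding Eground_def
  proof (rule INF_cong[OF refl])
    fix p assume "p \<in> {(\<Psi>, g). admissible l S \<Psi> g}"
    then have "(LINT X:Conf l|lebesgue. (fst p X)\<^sup>2) = 1"
      by (cases p) (simp only: mem_Collect_eq case_prod_conv fst_conv admissible_def)
    then show "ereal (expect l lam (\<lambda>_. c) (fst p) (snd p))
        = ereal (expect l lam (\<lambda>_. 0) (fst p) (snd p)) + ereal (real CARD('n) * c)"
      \<comment> \<open>uninstantiated, the rule would loop on its own \<open>c = 0\<close> instance on the right\<close>
      by (simp only: expect_const_potential[where c = c] plus_ereal.simps)
  qed
  then show ?thesis
    unfolding Eground_def by (simp only: INF_add_ereal)
qed

lemma Eground_zero_potential_nonneg: "0 \<le> lam \<Longrightarrow> 0 \<le> Eground l lam S (\<lambda>_. 0)"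
  unfolding Eground_def by (intro INF_greatest) (auto simp: expect_zero_potential_nonneg)

lemma Flieb_eq_infinity_if_mass_ne:
  fixes S :: "'n::finite set"
  assumes "0 \<le> lam" and mass: "(LINT r:Bbox l|lebesgue. \<rho>' r) \<noteq> real CARD('n)"
  shows "Flieb l lam S \<rho>' = \<infinity>"
proof (rule ereal_top)
  fix B
  define I where "I = (LINT r:Bbox l|lebesgue. \<rho>' r)"
  define c where "c = B / (real CARD('n) - I)"
  have "real CARD('n) - I \<noteq> 0"
    using mass unfolding I_def by simp
  then have "c * (real CARD('n) - I) = B"
    unfolding c_def by simp
  then have B: "real CARD('n) * c - c * I = B"
    by (simp add: algebra_simps)
  have "0 \<le> Eground l lam S (\<lambda>_. 0)"
    using \<open>0 \<le> lam\<close> by (rule Eground_zero_potential_nonneg)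
  then have "ereal (real CARD('n) * c - c * I)
      \<le> Eground l lam S (\<lambda>_. 0) + ereal (real CARD('n) * c - c * I)"
    by (rule add_increasing) simp_all
  also have "\<dots> = Eground l lam S (\<lambda>_. 0) + ereal (real CARD('n) * c) - ereal (c * I)"
    by (cases "Eground l lam S (\<lambda>_. 0)") simp_all
  also have "\<dots> = Eground l lam S (\<lambda>_. c) - ereal (inner_H l (\<lambda>_. c) \<rho>')"
    unfolding Eground_const_potential[of l lam S c] inner_H_def I_def set_integral_mult_right ..
  also have "\<dots> \<le> Flieb l lam S \<rho>'"
    unfolding Flieb_def by (rule SUP_upper) (simp only: mem_Collect_eq L2_Bbox_const)
  finally show "ereal B \<le> Flieb l lam S \<rho>'"
    unfolding B .
qed

theorem mainTheorem4:
  fixes l lam \<epsilon> c :: real and S :: "'n::finite set" and \<rho> :: "real^3 \<Rightarrow> real"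
  assumes "l > 0" and "0 \<le> lam" and "lam \<le> 1" and "\<epsilon> > 0"
    and "L2 (Bbox l) \<rho>"
    and "N_representable l CARD('n) \<rho>"
  shows "Feps l lam S \<epsilon> (\<lambda>r. \<rho> r + c) = Feps l lam S \<epsilon> \<rho> + ereal (l^3 * c^2 / (2 * \<epsilon>))"
proof -
  have mass: "(LINT r:Bbox l|lebesgue. \<rho> r) = real CARD('n)"
    using assms(6) unfolding N_representable_def by simp
  have shift: "Flieb l lam S \<rho>' + ereal (normsq_H l (\<lambda>r. \<rho> r + c - \<rho>' r) / (2 * \<epsilon>))
      = Flieb l lam S \<rho>' + ereal (normsq_H l (\<lambda>r. \<rho> r - \<rho>' r) / (2 * \<epsilon>))
        + ereal (l^3 * c^2 / (2 * \<epsilon>))"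
    if "L2 (Bbox l) \<rho>'" for \<rho>'
  proof (cases "(LINT r:Bbox l|lebesgue. \<rho>' r) = real CARD('n)")
    case True
    with normsq_H_add_const[OF assms(1,5) that] mass show ?thesis
      by (simp add: add_divide_distrib add.assoc)
  next
    case False
    with Flieb_eq_infinity_if_mass_ne[where S = S, OF assms(2)] show ?thesis by simp
  qed
  show ?thesis
    unfolding Feps_def INF_add_ereal[symmetric] by (rule INF_cong) (simp_all add: shift)
qed

end
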